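(* For every $m\geqslant4$, $$\left|\mathcal{D}_m-\frac12\cdot\frac{1}{2\uparrow\uparrow m}\right|\leqslant\frac{3}{3^{2\uparrow\uparrow(m-1)}}.$$
   Context: $H(n)$ is the height of the factorization tree of $n\geqslant1$: $H(1)=0$ and, for $n=p_1^{\alpha_1}\cdots p_k^{\alpha_k}>1$ with distinct primes $p_i$, $H(n)=1+\max_i H(\alpha_i)$. Tetration: $a\uparrow\uparrow0=1$, $a\uparrow\uparrow b=a^{a\uparrow\uparrow(b-1)}$. $\mathcal{D}_m$ denotes the natural density of the set $\{n\geqslant 1: H(n)=m\}$, i.e. $\mathcal{D}_m=\lim_{x\to\infty}\frac1x\#\{n\leqslant x:H(n)=m\}$ (which exists). *)

theory Defs
  imports "HOL-Analysis.Analysis" "HOL-Computational_Algebra.Primes"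
begin

lemma multiplicity_less_self:
  assumes "prime (p::nat)" "n > 1"
  shows "multiplicity p n < n"
proof -
  have "p ^ multiplicity p n dvd n" by (rule multiplicity_dvd)
  hence "p ^ multiplicity p n \<le> n" using assms(2) by (intro dvd_imp_le) auto
  moreover have "multiplicity p n < 2 ^ multiplicity p n" by (rule less_exp)
  moreover have "(2::nat) ^ multiplicity p n \<le> p ^ multiplicity p n"
    using prime_ge_2_nat[OF assms(1)] by (rule power_mono) simp
  ultimately show ?thesis by linarith
qed

text \<open>Height of the factorization tree: H(1) = 0 and
  H(n) = 1 + max over primes p | n of H(multiplicity p n). (H 0 = 0 is a dummy value.)\<close>
function H :: "nat \<Rightarrow> nat" where
  "H n = (if n \<le> 1 then 0
          else 1 + Max ((\<lambda>p. H (multiplicity p n)) ` prime_factors n))"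
  by auto
termination
  by (relation "Wellfounded.measure id") (auto intro: multiplicity_less_self simp: in_prime_factors_iff)

declare H.simps[simp del]

fun tet :: "nat \<Rightarrow> nat \<Rightarrow> nat" where
  "tet a 0 = 1"
| "tet a (Suc b) = a ^ tet a b"

text \<open>Natural density (the limit of the counting ratio, which exists for the sets considered).\<close>
definition natural_density :: "nat set \<Rightarrow> real" where
  "natural_density A = lim (\<lambda>x. real (card {n \<in> {1..x}. n \<in> A}) / real x)"

definition D :: "nat \<Rightarrow> real" where
  "D m = natural_density {n. n \<ge> 1 \<and> H n = m}"

end

theory Submission
  imports Defs
begin

(* For k >= 1, H n > k iff some exponent v_p(n) has height at least k, and 2^^k is the
   least integer of height at least k.  Writing T = 2^^(m-1), the set {H >= m} therefore
   contains the integers with v_2(n) = T exactly, of density 1/2^(T+1) = 1/(2 * 2^^m), and is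
   contained in that set together with the multiples of 4^T and of p^T for primes p >= 3; the
   set {H >= m+1} consists of multiples of (2^^m)-th powers.  Both error sets have density
   O(3^-T).  The densities exist because a set {n. Q (v_p n) for some prime p}, with 0 and 1
   not in Q, differs in density by at most 4/K from its restriction to primes p <= K and
   exponents < K, which is periodic modulo (K!)^K. *)

lemma H_eq_0: "n \<le> 1 \<Longrightarrow> H n = 0"
  by (simp add: H.simps[of n])

lemma gt_1_if_H_pos: "H n \<noteq> 0 \<Longrightarrow> n > 1"
  using H_eq_0[of n] by linarith

lemma Suc_le_H_iff:
  assumes "k \<ge> 1"
  shows "Suc k \<le> H n \<longleftrightarrow> (\<exists>p. prime p \<and> k \<le> H (multiplicity p n))"
proof (cases "n \<le> 1")
  case True
  then have "n = 0 \<or> n = 1" by auto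
  then show ?thesis using assms by (auto simp: H_eq_0)
next
  case False
  obtain q where "prime q" "q dvd n"
    using False prime_factor_nat[of n] by auto
  then have "q \<in> prime_factors n"
    using False by (simp add: in_prime_factors_iff)
  then have "prime_factors n \<noteq> {}"
    by blast
  then have "Suc k \<le> H n \<longleftrightarrow> (\<exists>p\<in>prime_factors n. k \<le> H (multiplicity p n))"
    using False by (simp add: H.simps[of n] Max_ge_iff)
  also have "\<dots> \<longleftrightarrow> (\<exists>p. prime p \<and> k \<le> H (multiplicity p n))"
  proof -
    have "\<not> k \<le> H (multiplicity p n)" if "prime p" "p \<notin> prime_factors n" for p
      using that False assms by (simp add: in_prime_factors_iff not_dvd_imp_multiplicity_0 H_eq_0)
    then show ?thesis
      by blast
  qed
  finally show ?thesis .
qed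

lemma H_power_two:
  assumes "e \<ge> 1"
  shows "H (2 ^ e) = Suc (H e)"
proof -
  have "prime_factors ((2::nat) ^ e) = {2}"
    using assms by (simp add: prime_factorization_prime_power)
  moreover have "(2::nat) ^ e > 1"
    using assms by (intro one_less_power) auto
  ultimately show ?thesis
    by (simp add: H.simps[of "2 ^ e"])
qed

lemma tet_pos: "tet 2 k \<ge> 1"
  by (induction k) auto

lemma tet_ge_2:
  assumes "k \<ge> 1"
  shows "tet 2 k \<ge> 2"
proof -
  obtain j where "k = Suc j"
    using assms by (cases k) auto
  moreover have "(2::nat) ^ 1 \<le> 2 ^ tet 2 j"
    using tet_pos[of j] by (intro power_increasing) auto
  ultimately show ?thesis by simp
qed

lemma tet_mono:
  assumes "j \<le> k"
  shows "tet 2 j \<le> tet 2 k"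
  using assms
proof (induction k rule: dec_induct)
  case (step n)
  have "tet 2 n < tet 2 (Suc n)"
    by (simp add: less_exp)
  then show ?case
    using step.IH by linarith
qed simp

lemma H_tet: "H (tet 2 k) = k"
proof (induction k)
  case 0
  then show ?case by (simp add: H_eq_0)
next
  case (Suc k)
  then show ?case using H_power_two[OF tet_pos[of k]] by simp
qed

lemma tet_le_if_le_H:
  assumes "a \<ge> 1" "k \<le> H a"
  shows "tet 2 k \<le> a"
  using assms
proof (induction k arbitrary: a)
  case 0
  then show ?case by simp
next
  case (Suc k)
  show ?case
  proof (cases "k = 0")
    case True
    then show ?thesis using gt_1_if_H_pos[of a] Suc.prems by simp
  next
    case False
    then obtain p where p: "prime p" "k \<le> H (multiplicity p a)"
      using Suc_le_H_iff[of k a] Suc.prems by auto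
    then have "multiplicity p a \<ge> 1"
      using False H_eq_0[of "multiplicity p a"] by linarith
    then have "tet 2 k \<le> multiplicity p a"
      using Suc.IH p(2) by blast
    then have "(2::nat) ^ tet 2 k \<le> 2 ^ multiplicity p a"
      by (intro power_increasing) auto
    also have "\<dots> \<le> p ^ multiplicity p a"
      using prime_ge_2_nat[OF p(1)] by (intro power_mono) auto
    also have "\<dots> \<le> a"
      using Suc.prems(1) by (intro dvd_imp_le multiplicity_dvd) auto
    finally show ?thesis by simp
  qed
qed

lemma multiplicity_ge_tet_if_Suc_le_H:
  assumes "k \<ge> 1" "Suc k \<le> H n"
  obtains p where "prime p" "tet 2 k \<le> multiplicity p n"
proof -
  obtain p where p: "prime p" "k \<le> H (multiplicity p n)"
    using assms Suc_le_H_iff by blast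
  then have "multiplicity p n \<ge> 1"
    using assms(1) H_eq_0[of "multiplicity p n"] by linarith
  then show ?thesis
    using that p by (blast intro: tet_le_if_le_H)
qed

lemma twice_tet_le_if_le_H:
  assumes "k \<ge> 2" "k \<le> H a" "a \<noteq> tet 2 k"
  shows "2 * tet 2 k \<le> a"
proof -
  obtain k' where k: "k = Suc k'" "k' \<ge> 1"
    using assms(1) by (cases k) auto
  define t where "t = tet 2 k'"
  have a: "a \<ge> 1"
    using assms(1,2) gt_1_if_H_pos[of a] by simp
  obtain p where p: "prime p" "t \<le> multiplicity p a"
    using multiplicity_ge_tet_if_Suc_le_H[of k' a] k assms(2) unfolding t_def by auto
  define b where "b = multiplicity p a"
  have "t \<le> b" "p ^ t dvd a"
    using p by (simp_all add: b_def multiplicity_dvd')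
  have "p ^ b \<le> a"
    using a by (simp add: b_def dvd_imp_le multiplicity_dvd)
  have "t \<ge> 2"
    using k(2) by (simp add: t_def tet_ge_2)
  have "p = 2 \<or> p \<ge> 3"
    using prime_ge_2_nat[OF p(1)] by linarith
  then consider "p = 2" "b = t" | "p = 2" "b > t" | "p \<ge> 3"
    using \<open>t \<le> b\<close> le_neq_implies_less by blast
  then show ?thesis
  proof cases
    case 1
    then obtain c where c: "a = 2 ^ t * c"
      using \<open>p ^ t dvd a\<close> by auto
    have "c \<noteq> 1"
      using c assms(3) k by (simp add: t_def)
    moreover have "c \<noteq> 0"
      using c a by auto
    ultimately show ?thesis
      using c k by (simp add: t_def)
  next
    case 2
    then have "(2::nat) ^ Suc t \<le> 2 ^ b"
      by (intro power_increasing) auto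
    then show ?thesis
      using \<open>p ^ b \<le> a\<close> 2 k by (simp add: t_def)
  next
    case 3
    have "2 * 2 ^ t \<le> (3::nat) ^ t"
      using \<open>t \<ge> 2\<close> by (induction t rule: dec_induct) auto
    also have "\<dots> \<le> 3 ^ b"
      using \<open>t \<le> b\<close> by (intro power_increasing) auto
    also have "\<dots> \<le> p ^ b"
      using 3 by (intro power_mono) auto
    finally show ?thesis
      using \<open>p ^ b \<le> a\<close> k by (simp add: t_def)
  qed
qed

lemma Suc_le_H_if_exact_power_two_dvd:
  assumes "k \<ge> 1" "2 ^ tet 2 k dvd n" "\<not> 2 ^ Suc (tet 2 k) dvd n"
  shows "Suc k \<le> H n"
proof -
  have "multiplicity 2 n = tet 2 k"
    using assms(2,3) by (rule multiplicity_eqI)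
  then have "k \<le> H (multiplicity 2 n)"
    by (simp add: H_tet)
  then show ?thesis
    using Suc_le_H_iff[OF assms(1)] two_is_prime_nat by blast
qed

lemma Suc_le_H_cases:
  assumes "k \<ge> 2" "Suc k \<le> H n"
  obtains "2 ^ tet 2 k dvd n" "\<not> 2 ^ Suc (tet 2 k) dvd n"
    | "2 ^ (2 * tet 2 k) dvd n"
    | j where "j \<ge> 3" "j ^ tet 2 k dvd n"
proof -
  obtain p where p: "prime p" "k \<le> H (multiplicity p n)"
    using assms Suc_le_H_iff[of k n] by auto
  define a where "a = multiplicity p n"
  have "a \<ge> 1"
    using p(2) assms(1) gt_1_if_H_pos[of a] by (simp add: a_def)
  then have "tet 2 k \<le> a"
    using p(2) by (simp add: a_def tet_le_if_le_H)
  show ?thesis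
  proof (cases "p = 2")
    case True
    show ?thesis
    proof (cases "a = tet 2 k")
      case True
      have "n \<noteq> 0"
        using assms(2) gt_1_if_H_pos[of n] by auto
      then have "\<not> 2 ^ Suc a dvd n"
        using power_dvd_iff_le_multiplicity[of n 2 "Suc a"] \<open>p = 2\<close> by (simp add: a_def)
      moreover have "2 ^ a dvd n"
        using \<open>p = 2\<close> by (simp add: a_def multiplicity_dvd)
      ultimately show ?thesis
        using that(1) True by simp
    next
      case False
      then have "2 * tet 2 k \<le> multiplicity p n"
        using twice_tet_le_if_le_H[OF assms(1) p(2)] by (simp add: a_def)
      then show ?thesis
        using that(2) \<open>p = 2\<close> multiplicity_dvd' by blast
    qed
  next
    case False
    then have "p \<ge> 3"
      using prime_ge_2_nat[OF p(1)] by linarith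
    moreover have "p ^ tet 2 k dvd n"
      using \<open>tet 2 k \<le> a\<close> by (simp add: a_def multiplicity_dvd')
    ultimately show ?thesis
      using that(3) by blast
  qed
qed

definition count_upto :: "(nat \<Rightarrow> bool) \<Rightarrow> nat \<Rightarrow> nat" where
  "count_upto P x = card {n \<in> {1..x}. P n}"

lemma count_upto_0 [simp]: "count_upto P 0 = 0"
  by (simp add: count_upto_def)

lemma count_upto_Suc: "count_upto P (Suc x) = count_upto P x + (if P (Suc x) then 1 else 0)"
proof -
  have "{n \<in> {1..Suc x}. P n} = {n \<in> {1..x}. P n} \<union> (if P (Suc x) then {Suc x} else {})"
    by (auto simp: le_Suc_eq)
  then show ?thesis
    by (simp add: count_upto_def)
qed

lemma count_upto_le: "count_upto P x \<le> x"
proof -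
  have "count_upto P x \<le> card {1..x}"
    unfolding count_upto_def by (rule card_mono) auto
  then show ?thesis
    by simp
qed

lemma count_upto_mono:
  "(\<And>n. 1 \<le> n \<Longrightarrow> n \<le> x \<Longrightarrow> P n \<Longrightarrow> Q n) \<Longrightarrow> count_upto P x \<le> count_upto Q x"
  unfolding count_upto_def by (rule card_mono) auto

lemma count_upto_diff:
  assumes "\<And>n. Q n \<Longrightarrow> P n"
  shows "real (count_upto (\<lambda>n. P n \<and> \<not> Q n) x) = real (count_upto P x) - real (count_upto Q x)"
proof -
  have "{n \<in> {1..x}. P n \<and> \<not> Q n} = {n \<in> {1..x}. P n} - {n \<in> {1..x}. Q n}"
    and "{n \<in> {1..x}. Q n} \<subseteq> {n \<in> {1..x}. P n}"
    using assms by auto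
  then show ?thesis
    by (simp add: count_upto_def card_Diff_subset card_mono)
qed

lemma count_upto_disj: "count_upto (\<lambda>n. P n \<or> Q n) x \<le> count_upto P x + count_upto Q x"
proof -
  have "{n \<in> {1..x}. P n \<or> Q n} = {n \<in> {1..x}. P n} \<union> {n \<in> {1..x}. Q n}"
    by auto
  then show ?thesis
    unfolding count_upto_def by (metis card_Un_le)
qed

lemma count_upto_Bex:
  assumes "finite J"
  shows "count_upto (\<lambda>n. \<exists>j\<in>J. P j n) x \<le> (\<Sum>j\<in>J. count_upto (P j) x)"
proof -
  have "{n \<in> {1..x}. \<exists>j\<in>J. P j n} = (\<Union>j\<in>J. {n \<in> {1..x}. P j n})"
    by auto
  then show ?thesis
    unfolding count_upto_def using card_UN_le[OF assms] by simp
qed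

lemma count_upto_dvd: "count_upto (\<lambda>n. d dvd n) x = x div d"
  by (induction x) (simp_all add: count_upto_Suc div_Suc dvd_eq_mod_eq_0)

lemma real_of_nat_div_gt: "real x / real d - 1 < real (x div d)"
proof (cases "d = 0")
  case False
  then have "real (x mod d) / real d < 1"
    by simp
  then show ?thesis
    using of_nat_of_nat_div_aux[where 'a=real, of x d] by linarith
qed simp

lemma count_upto_dvd_le: "real (count_upto (\<lambda>n. d dvd n) x) \<le> real x / real d"
  by (simp add: count_upto_dvd of_nat_div_le_of_nat)

lemma count_upto_dvd_not_dvd:
  assumes "a dvd b"
  shows "\<bar>real (count_upto (\<lambda>n. a dvd n \<and> \<not> b dvd n) x) - (real x / real a - real x / real b)\<bar> \<le> 1"
proof -
  have "real (count_upto (\<lambda>n. a dvd n \<and> \<not> b dvd n) x) = real (x div a) - real (x div b)"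
    using assms by (simp add: count_upto_diff count_upto_dvd dvd_trans)
  then show ?thesis
    using real_of_nat_div_gt[of x a] real_of_nat_div_gt[of x b]
      of_nat_div_le_of_nat[where 'a=real, of x a] of_nat_div_le_of_nat[where 'a=real, of x b]
    unfolding abs_le_iff by linarith
qed

lemma sum_inverse_squares_le:
  assumes "j0 \<ge> 1"
  shows "(\<Sum>j\<in>{Suc j0..N}. 1 / real j ^ 2) \<le> 1 / real j0"
proof -
  have telescope: "(\<Sum>j\<in>{Suc j0..N}. 1 / real j ^ 2) \<le> 1 / real j0 - 1 / real N"
    if "j0 \<le> N" for N
    using that
  proof (induction N rule: dec_induct)
    case base
    then show ?case by simp
  next
    case (step n)
    have "real n \<ge> 1"
      using step.hyps assms by simp
    then have "1 / real n - 1 / real (Suc n) = 1 / (real n * real (Suc n))"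
      by (simp add: field_simps)
    moreover have "1 / real (Suc n) ^ 2 \<le> 1 / (real n * real (Suc n))"
      using \<open>real n \<ge> 1\<close> by (intro divide_left_mono) (auto simp: power2_eq_square)
    moreover have "{Suc j0..Suc n} = insert (Suc n) {Suc j0..n}"
      using step.hyps by auto
    ultimately show ?case
      using step.IH by simp
  qed
  show ?thesis
  proof (cases "j0 \<le> N")
    case True
    have "0 \<le> 1 / real N"
      by simp
    with telescope[OF True] show ?thesis
      by linarith
  qed simp
qed

lemma sum_inverse_powers_le:
  assumes "U \<ge> 2" "j0 \<ge> 1"
  shows "(\<Sum>j\<in>{j0..N}. 1 / real j ^ U) \<le> 1 / real j0 ^ U + 1 / (real j0 * real (Suc j0) ^ (U - 2))"
proof -
  have "(\<Sum>j\<in>{j0..N}. 1 / real j ^ U) \<le> (\<Sum>j\<in>insert j0 {Suc j0..N}. 1 / real j ^ U)"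
    by (rule sum_mono2) auto
  also have "\<dots> = 1 / real j0 ^ U + (\<Sum>j\<in>{Suc j0..N}. 1 / real j ^ U)"
    by simp
  also have "(\<Sum>j\<in>{Suc j0..N}. 1 / real j ^ U)
      \<le> (\<Sum>j\<in>{Suc j0..N}. 1 / real (Suc j0) ^ (U - 2) * (1 / real j ^ 2))"
  proof (rule sum_mono)
    fix j assume "j \<in> {Suc j0..N}"
    then have "real (Suc j0) ^ (U - 2) * real j ^ 2 \<le> real j ^ (U - 2) * real j ^ 2"
      by (intro mult_right_mono power_mono) auto
    also have "\<dots> = real j ^ U"
      using assms(1) by (metis le_add_diff_inverse2 power_add)
    finally show "1 / real j ^ U \<le> 1 / real (Suc j0) ^ (U - 2) * (1 / real j ^ 2)"
      using \<open>j \<in> {Suc j0..N}\<close> by (simp add: divide_simps)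
  qed
  also have "\<dots> \<le> 1 / real (Suc j0) ^ (U - 2) * (1 / real j0)"
    unfolding sum_distrib_left[symmetric] using sum_inverse_squares_le[OF assms(2)]
    by (rule mult_left_mono) simp
  finally show ?thesis
    by (simp add: mult.commute)
qed

lemma count_upto_power_multiples_le:
  assumes "U \<ge> 2" "j0 \<ge> 1"
  shows "real (count_upto (\<lambda>n. \<exists>j\<ge>j0. j ^ U dvd n) x)
    \<le> real x * (1 / real j0 ^ U + 1 / (real j0 * real (Suc j0) ^ (U - 2)))"
proof -
  have "count_upto (\<lambda>n. \<exists>j\<ge>j0. j ^ U dvd n) x \<le> count_upto (\<lambda>n. \<exists>j\<in>{j0..x}. j ^ U dvd n) x"
  proof (rule count_upto_mono)
    fix n assume n: "1 \<le> n" "n \<le> x" "\<exists>j\<ge>j0. j ^ U dvd n"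
    then obtain j where j: "j \<ge> j0" "j ^ U dvd n"
      by blast
    have "j \<le> j ^ U"
      using j(1) assms by (simp add: self_le_power)
    also have "\<dots> \<le> n"
      using j(2) n(1) by (intro dvd_imp_le) auto
    finally show "\<exists>j\<in>{j0..x}. j ^ U dvd n"
      using j n(2) by auto
  qed
  also have "\<dots> \<le> (\<Sum>j\<in>{j0..x}. count_upto (\<lambda>n. j ^ U dvd n) x)"
    by (rule count_upto_Bex) simp
  finally have "real (count_upto (\<lambda>n. \<exists>j\<ge>j0. j ^ U dvd n) x)
      \<le> (\<Sum>j\<in>{j0..x}. real (count_upto (\<lambda>n. j ^ U dvd n) x))"
    by (simp flip: of_nat_sum)
  also have "\<dots> \<le> (\<Sum>j\<in>{j0..x}. real x * (1 / real j ^ U))"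
  proof (rule sum_mono)
    fix j
    show "real (count_upto (\<lambda>n. j ^ U dvd n) x) \<le> real x * (1 / real j ^ U)"
      using count_upto_dvd_le[of "j ^ U" x] by simp
  qed
  also have "\<dots> \<le> real x * (1 / real j0 ^ U + 1 / (real j0 * real (Suc j0) ^ (U - 2)))"
    unfolding sum_distrib_left[symmetric] using sum_inverse_powers_le[OF assms]
    by (rule mult_left_mono) simp
  finally show ?thesis .
qed

lemma count_upto_add_period:
  assumes "\<And>n. n \<ge> 1 \<Longrightarrow> A (n + M) = A n"
  shows "count_upto A (x + M) = count_upto A x + count_upto A M"
proof (induction x)
  case (Suc x)
  then show ?case
    using assms[of "Suc x"] by (simp add: count_upto_Suc)
qed simp

lemma count_upto_periodic_approx:
  assumes "M \<ge> 1" and periodic: "\<And>n. n \<ge> 1 \<Longrightarrow> A (n + M) = A n"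
  shows "\<bar>real (count_upto A x) - real x * (real (count_upto A M) / real M)\<bar> \<le> real M"
proof -
  define q r c where "q = x div M" and "r = x mod M" and "c = count_upto A M"
  have "count_upto A (q * M + r) = q * c + count_upto A r" for q r
  proof (induction q)
    case (Suc q)
    have "count_upto A (Suc q * M + r) = count_upto A ((q * M + r) + M)"
      by (simp add: algebra_simps)
    also have "\<dots> = count_upto A (q * M + r) + c"
      unfolding c_def by (rule count_upto_add_period[where A=A and M=M, OF periodic])
    finally show ?case
      using Suc.IH by simp
  qed simp
  moreover have x: "x = q * M + r"
    by (simp add: q_def r_def)
  ultimately have "real (count_upto A x) = real q * real c + real (count_upto A r)"
    by simp
  moreover have "real x * (real c / real M) = real q * real c + real r * (real c / real M)"
    using x assms(1) by (simp add: field_simps)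
  moreover have "real r < real M" "real (count_upto A r) \<le> real r"
    using assms(1) count_upto_le[of A r] by (simp_all add: r_def)
  moreover have "real c / real M \<le> 1"
    using count_upto_le[of A M] assms(1) by (simp add: c_def)
  then have "0 \<le> real r * (real c / real M)" "real r * (real c / real M) \<le> real r"
    by (simp, intro mult_left_le) simp_all
  ultimately show ?thesis
    unfolding c_def abs_le_iff by linarith
qed

definition some_prime_exponent :: "(nat \<Rightarrow> bool) \<Rightarrow> nat \<Rightarrow> bool" where
  "some_prime_exponent Q n \<longleftrightarrow> (\<exists>p. prime p \<and> Q (multiplicity p n))"

definition small_prime_exponent :: "(nat \<Rightarrow> bool) \<Rightarrow> nat \<Rightarrow> nat \<Rightarrow> bool" where
  "small_prime_exponent Q K n \<longleftrightarrow>
     (\<exists>p. prime p \<and> p \<le> K \<and> multiplicity p n < K \<and> Q (multiplicity p n))"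

lemma min_multiplicity_add:
  fixes p n M :: nat
  assumes "prime p" "n \<noteq> 0" "p ^ K dvd M"
  shows "min (multiplicity p (n + M)) K = min (multiplicity p n) K"
proof -
  have "\<not> is_unit p"
    using assms(1) not_prime_unit by blast
  note power_dvd_iff = power_dvd_iff_le_multiplicity[OF _ this]
  show ?thesis
  proof (cases "multiplicity p n < K")
    case True
    define v where "v = multiplicity p n"
    have "p ^ Suc v dvd p ^ K"
      using True by (intro le_imp_power_dvd) (simp add: v_def)
    then have "p ^ Suc v dvd M"
      using assms(3) by (rule dvd_trans)
    moreover have "\<not> p ^ Suc v dvd n"
      using power_dvd_iff[OF assms(2), of "Suc v"] by (simp add: v_def)
    ultimately have "\<not> p ^ Suc v dvd n + M"
      by (simp add: dvd_add_left_iff)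
    moreover have "p ^ v dvd M"
      using \<open>p ^ Suc v dvd M\<close> by (metis dvd_mult_right power_Suc)
    then have "p ^ v dvd n + M"
      by (simp add: v_def multiplicity_dvd)
    ultimately have "multiplicity p (n + M) = v"
      by (intro multiplicity_eqI) auto
    then show ?thesis
      by (simp add: v_def)
  next
    case False
    then have "p ^ K dvd n + M"
      using assms(3) by (simp add: multiplicity_dvd')
    then have "K \<le> multiplicity p (n + M)"
      using power_dvd_iff[of "n + M" K] assms(2) by simp
    then show ?thesis
      using False by simp
  qed
qed

lemma small_prime_exponent_periodic:
  assumes "n \<ge> 1"
  shows "small_prime_exponent Q K (n + fact K ^ K) = small_prime_exponent Q K n"
proof -
  have "min (multiplicity p (n + fact K ^ K)) K = min (multiplicity p n) K"
    if "prime p" "p \<le> K" for p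
  proof (rule min_multiplicity_add)
    show "p ^ K dvd fact K ^ K"
      using that prime_gt_0_nat[of p] by (intro dvd_power_same dvd_fact) auto
  qed (use assms that in auto)
  moreover have "v < K \<and> Q v \<longleftrightarrow> min v K < K \<and> Q (min v K)" for v
    by (cases "v < K") auto
  ultimately show ?thesis
    unfolding small_prime_exponent_def by metis
qed

lemma power_multiple_if_not_small_prime_exponent:
  assumes "\<not> Q 0" "\<not> Q 1" "some_prime_exponent Q n" "\<not> small_prime_exponent Q K n"
  shows "(\<exists>j\<ge>2. j ^ K dvd n) \<or> (\<exists>j\<ge>Suc K. j ^ 2 dvd n)"
proof -
  obtain p where p: "prime p" "Q (multiplicity p n)"
    using assms(3) by (auto simp: some_prime_exponent_def)
  show ?thesis
  proof (cases "p \<le> K")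
    case True
    then have "K \<le> multiplicity p n"
      using assms(4) p by (auto simp: small_prime_exponent_def not_less)
    then have "p ^ K dvd n"
      by (rule multiplicity_dvd')
    then show ?thesis
      using prime_ge_2_nat[OF p(1)] by blast
  next
    case False
    have "2 \<le> multiplicity p n"
    proof (rule ccontr)
      assume "\<not> 2 \<le> multiplicity p n"
      then have "multiplicity p n = 0 \<or> multiplicity p n = 1"
        by auto
      then show False
        using p(2) assms(1,2) by auto
    qed
    then have "p ^ 2 dvd n"
      by (rule multiplicity_dvd')
    moreover have "p \<ge> Suc K"
      using False by simp
    ultimately show ?thesis
      by blast
  qed
qed

lemma count_upto_power_or_square_multiples_le:
  assumes "K \<ge> 2"
  shows "real (count_upto (\<lambda>n. (\<exists>j\<ge>2. j ^ K dvd n) \<or> (\<exists>j\<ge>Suc K. j ^ 2 dvd n)) x)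
    \<le> 4 / real K * real x"
proof -
  have "real (count_upto (\<lambda>n. (\<exists>j\<ge>2. j ^ K dvd n) \<or> (\<exists>j\<ge>Suc K. j ^ 2 dvd n)) x)
      \<le> real (count_upto (\<lambda>n. \<exists>j\<ge>2. j ^ K dvd n) x)
        + real (count_upto (\<lambda>n. \<exists>j\<ge>Suc K. j ^ 2 dvd n) x)"
    using count_upto_disj by (simp flip: of_nat_add)
  also have "\<dots> \<le> real x * (1 / 2 ^ K + 1 / (2 * 3 ^ (K - 2)))
      + real x * (1 / real (Suc K) ^ 2 + 1 / real (Suc K))"
    using count_upto_power_multiples_le[OF assms, of 2 x]
      count_upto_power_multiples_le[of 2 "Suc K" x]
    by (intro add_mono) simp_all
  also have "\<dots> = real x *
      ((1 / 2 ^ K + 1 / (2 * 3 ^ (K - 2))) + (1 / real (Suc K) ^ 2 + 1 / real (Suc K)))"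
    by (simp add: distrib_left)
  also have "\<dots> \<le> real x * (4 / real K)"
  proof (rule mult_left_mono)
    have K: "real K > 0"
      using assms by simp
    have "j + 2 \<le> 2 * 3 ^ j" for j :: nat
      by (induction j) auto
    from this[of "K - 2"] have "K \<le> 2 * 3 ^ (K - 2)"
      using assms by simp
    then have "real K \<le> 2 * 3 ^ (K - 2)"
      by (metis of_nat_le_iff of_nat_mult of_nat_numeral of_nat_power)
    then have "1 / (2 * 3 ^ (K - 2)) \<le> 1 / real K"
      using K by (intro divide_left_mono) auto
    moreover have "1 / 2 ^ K \<le> 1 / real K"
      using K less_exp[of K] by (intro divide_left_mono) (auto simp flip: of_nat_le_iff)
    moreover have "1 + real K \<le> (1 + real K) ^ 2"
      by (rule self_le_power) auto
    then have "1 / real (Suc K) ^ 2 \<le> 1 / real K"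
      using K by (intro divide_left_mono) auto
    moreover have "1 / real (Suc K) \<le> 1 / real K"
      using K by (intro divide_left_mono) auto
    moreover have "4 / real K = 1 / real K + 1 / real K + 1 / real K + 1 / real K"
      by simp
    ultimately show "(1 / 2 ^ K + 1 / (2 * 3 ^ (K - 2))) + (1 / real (Suc K) ^ 2 + 1 / real (Suc K))
        \<le> 4 / real K"
      by linarith
  qed simp
  finally show ?thesis
    by (simp add: mult.commute)
qed

lemma count_some_minus_small_prime_exponent_le:
  assumes "\<not> Q 0" "\<not> Q 1" "K \<ge> 2"
  shows "real (count_upto (some_prime_exponent Q) x) - real (count_upto (small_prime_exponent Q K) x)
    \<le> 4 / real K * real x"
proof -
  have "small_prime_exponent Q K n \<Longrightarrow> some_prime_exponent Q n" for n
    by (auto simp: small_prime_exponent_def some_prime_exponent_def)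
  then have "real (count_upto (some_prime_exponent Q) x) - real (count_upto (small_prime_exponent Q K) x)
      = real (count_upto (\<lambda>n. some_prime_exponent Q n \<and> \<not> small_prime_exponent Q K n) x)"
    by (simp add: count_upto_diff)
  also have "\<dots> \<le> real (count_upto (\<lambda>n. (\<exists>j\<ge>2. j ^ K dvd n) \<or> (\<exists>j\<ge>Suc K. j ^ 2 dvd n)) x)"
    unfolding of_nat_le_iff
    by (rule count_upto_mono)
      (use power_multiple_if_not_small_prime_exponent[OF assms(1,2)] in blast)
  also have "\<dots> \<le> 4 / real K * real x"
    by (rule count_upto_power_or_square_multiples_le[OF assms(3)])
  finally show ?thesis .
qed

lemma count_some_prime_exponent_approx:
  assumes "\<not> Q 0" "\<not> Q 1" "K \<ge> 2"
  obtains c M where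
    "\<And>x. \<bar>real (count_upto (some_prime_exponent Q) x) - c * real x\<bar> \<le> 4 / real K * real x + M"
proof -
  define P :: nat where "P = fact K ^ K"
  define c where "c = real (count_upto (small_prime_exponent Q K) P) / real P"
  have "\<bar>real (count_upto (some_prime_exponent Q) x) - c * real x\<bar> \<le> 4 / real K * real x + real P"
    for x
  proof -
    have "\<bar>real (count_upto (small_prime_exponent Q K) x) - real x * c\<bar> \<le> real P"
      unfolding c_def
      by (rule count_upto_periodic_approx) (simp_all add: P_def small_prime_exponent_periodic)
    moreover have "count_upto (small_prime_exponent Q K) x \<le> count_upto (some_prime_exponent Q) x"
      by (rule count_upto_mono) (auto simp: small_prime_exponent_def some_prime_exponent_def)
    ultimately show ?thesis
      using count_some_minus_small_prime_exponent_le[OF assms, of x]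
      unfolding abs_le_iff mult.commute[of c] by linarith
  qed
  then show ?thesis
    by (rule that)
qed

lemma convergent_ratio_if_approx:
  fixes f :: "nat \<Rightarrow> real"
  assumes "\<And>e. e > 0 \<Longrightarrow> \<exists>c M. \<forall>x. \<bar>f x - c * real x\<bar> \<le> e * real x + M"
  shows "convergent (\<lambda>x. f x / real x)"
proof (rule Cauchy_convergent, rule metric_CauchyI)
  fix e :: real
  assume "e > 0"
  then obtain c M where approx: "\<And>x. \<bar>f x - c * real x\<bar> \<le> e / 4 * real x + M"
    using assms[of "e / 4"] by auto
  obtain N :: nat where N: "4 * \<bar>M\<bar> / e < real N"
    using reals_Archimedean2 by blast
  have close: "\<bar>f x / real x - c\<bar> < e / 2" if "x \<ge> N" for x
  proof -
    have x: "real x > 4 * \<bar>M\<bar> / e"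
      using N that by linarith
    moreover have "4 * \<bar>M\<bar> / e \<ge> 0"
      using \<open>e > 0\<close> by simp
    ultimately have "real x > 0"
      by linarith
    then have "\<bar>f x / real x - c\<bar> = \<bar>f x - c * real x\<bar> / real x"
      by (simp add: field_simps)
    also have "\<dots> \<le> (e / 4 * real x + M) / real x"
      using approx \<open>real x > 0\<close> by (intro divide_right_mono) auto
    also have "\<dots> = e / 4 + M / real x"
      using \<open>real x > 0\<close> by (simp add: field_simps)
    also have "M / real x < e / 4"
      using x \<open>e > 0\<close> \<open>real x > 0\<close> by (simp add: field_simps)
    finally show ?thesis
      by simp
  qed
  show "\<exists>N. \<forall>m\<ge>N. \<forall>n\<ge>N. dist (f m / real m) (f n / real n) < e"
  proof (intro exI allI impI)
    fix m n
    assume "m \<ge> N" "n \<ge> N"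
    with close[of m] close[of n] show "dist (f m / real m) (f n / real n) < e"
      unfolding dist_real_def by linarith
  qed
qed

lemma convergent_ratio_some_prime_exponent:
  assumes "\<not> Q 0" "\<not> Q 1"
  shows "convergent (\<lambda>x. real (count_upto (some_prime_exponent Q) x) / real x)"
proof (rule convergent_ratio_if_approx)
  fix e :: real
  assume "e > 0"
  obtain n :: nat where "4 / e \<le> real n"
    using real_arch_simple by blast
  define K where "K = max n 2"
  have K: "K \<ge> 2" "4 / e \<le> real K"
    using \<open>4 / e \<le> real n\<close> by (simp_all add: K_def)
  then have "4 / real K \<le> e"
    using \<open>e > 0\<close> by (simp add: field_simps)
  obtain c M where
    approx: "\<And>x. \<bar>real (count_upto (some_prime_exponent Q) x) - c * real x\<bar> \<le> 4 / real K * real x + M"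
    using count_some_prime_exponent_approx[OF assms K(1)] by blast
  have "\<bar>real (count_upto (some_prime_exponent Q) x) - c * real x\<bar> \<le> e * real x + M" for x
  proof -
    have "4 / real K * real x \<le> e * real x"
      using \<open>4 / real K \<le> e\<close> by (intro mult_right_mono) auto
    then show ?thesis
      using approx[of x] by linarith
  qed
  then show "\<exists>c M. \<forall>x. \<bar>real (count_upto (some_prime_exponent Q) x) - c * real x\<bar> \<le> e * real x + M"
    by blast
qed

lemma ratio_limit_le:
  fixes f :: "nat \<Rightarrow> real"
  assumes "(\<lambda>x. f x / real x) \<longlonglongrightarrow> L" "\<And>x. f x \<le> h * real x + e"
  shows "L \<le> h"
proof (rule tendsto_le[OF trivial_limit_sequentially])
  show "(\<lambda>x. h + e / real x) \<longlonglongrightarrow> h"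
    using tendsto_add[OF tendsto_const[of h] lim_const_over_n[of e]] by simp
  show "(\<lambda>x. f x / real x) \<longlonglongrightarrow> L"
    by (fact assms(1))
  show "\<forall>\<^sub>F x in sequentially. f x / real x \<le> h + e / real x"
    using eventually_gt_at_top[of 0]
  proof eventually_elim
    case (elim x)
    have "f x / real x \<le> (h * real x + e) / real x"
      using assms(2) by (rule divide_right_mono) simp
    then show ?case
      using elim by (simp add: add_divide_distrib)
  qed
qed

lemma ratio_limit_ge:
  fixes f :: "nat \<Rightarrow> real"
  assumes "(\<lambda>x. f x / real x) \<longlonglongrightarrow> L" "\<And>x. h * real x - e \<le> f x"
  shows "h \<le> L"
proof (rule tendsto_le[OF trivial_limit_sequentially])
  show "(\<lambda>x. h - e / real x) \<longlonglongrightarrow> h"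
    using tendsto_diff[OF tendsto_const[of h] lim_const_over_n[of e]] by simp
  show "(\<lambda>x. f x / real x) \<longlonglongrightarrow> L"
    by (fact assms(1))
  show "\<forall>\<^sub>F x in sequentially. h - e / real x \<le> f x / real x"
    using eventually_gt_at_top[of 0]
  proof eventually_elim
    case (elim x)
    have "(h * real x - e) / real x \<le> f x / real x"
      using assms(2) by (rule divide_right_mono) simp
    then show ?case
      using elim by (simp add: diff_divide_distrib)
  qed
qed

definition H_ge_density :: "nat \<Rightarrow> real" where
  "H_ge_density k = lim (\<lambda>x. real (count_upto (\<lambda>n. k \<le> H n) x) / real x)"

lemma convergent_ratio_H_ge:
  assumes "k \<ge> 2"
  shows "convergent (\<lambda>x. real (count_upto (\<lambda>n. k \<le> H n) x) / real x)"
proof -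
  obtain j where j: "k = Suc j" "j \<ge> 1"
    using assms by (cases k) auto
  then have "(\<lambda>n. k \<le> H n) = some_prime_exponent (\<lambda>a. j \<le> H a)"
    using Suc_le_H_iff[OF j(2)] by (simp add: fun_eq_iff some_prime_exponent_def)
  moreover have "\<not> j \<le> H 0" "\<not> j \<le> H 1"
    using j(2) by (simp_all add: H_eq_0)
  ultimately show ?thesis
    using convergent_ratio_some_prime_exponent[of "\<lambda>a. j \<le> H a"] by simp
qed

lemma ratio_H_ge_tendsto:
  assumes "k \<ge> 2"
  shows "(\<lambda>x. real (count_upto (\<lambda>n. k \<le> H n) x) / real x) \<longlonglongrightarrow> H_ge_density k"
  using convergent_ratio_H_ge[OF assms] by (simp add: H_ge_density_def convergent_LIMSEQ_iff)

lemma D_eq_H_ge_density_diff: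
  assumes "m \<ge> 2"
  shows "D m = H_ge_density m - H_ge_density (Suc m)"
proof -
  let ?ratio = "\<lambda>k x. real (count_upto (\<lambda>n. k \<le> H n) x) / real x"
  have "card {n \<in> {1..x}. n \<in> {n. n \<ge> 1 \<and> H n = m}} = count_upto (\<lambda>n. m \<le> H n \<and> \<not> Suc m \<le> H n) x"
    for x
    unfolding count_upto_def by (rule arg_cong[where f = card]) auto
  moreover have "real (count_upto (\<lambda>n. m \<le> H n \<and> \<not> Suc m \<le> H n) x)
      = real (count_upto (\<lambda>n. m \<le> H n) x) - real (count_upto (\<lambda>n. Suc m \<le> H n) x)" for x
    by (rule count_upto_diff) simp
  ultimately have "D m = lim (\<lambda>x. ?ratio m x - ?ratio (Suc m) x)"
    by (simp add: D_def natural_density_def diff_divide_distrib)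
  also have "\<dots> = H_ge_density m - H_ge_density (Suc m)"
    using assms by (intro limI tendsto_diff ratio_H_ge_tendsto) simp_all
  finally show ?thesis .
qed

lemma H_ge_density_nonneg:
  assumes "k \<ge> 2"
  shows "0 \<le> H_ge_density k"
  using ratio_H_ge_tendsto[OF assms] by (rule ratio_limit_ge[where e = 0]) simp

lemma H_ge_density_ge:
  assumes "k \<ge> 1"
  shows "1 / 2 ^ Suc (tet 2 k) \<le> H_ge_density (Suc k)"
proof (rule ratio_limit_ge[where e = 1])
  show "(\<lambda>x. real (count_upto (\<lambda>n. Suc k \<le> H n) x) / real x) \<longlonglongrightarrow> H_ge_density (Suc k)"
    using assms by (intro ratio_H_ge_tendsto) simp
next
  define T where "T = tet 2 k"
  fix x
  have "\<bar>real (count_upto (\<lambda>n. 2 ^ T dvd n \<and> \<not> 2 ^ Suc T dvd n) x)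
      - (real x / 2 ^ T - real x / 2 ^ Suc T)\<bar> \<le> 1"
    using count_upto_dvd_not_dvd[of "2 ^ T" "2 ^ Suc T" x] by simp
  moreover have "count_upto (\<lambda>n. 2 ^ T dvd n \<and> \<not> 2 ^ Suc T dvd n) x
      \<le> count_upto (\<lambda>n. Suc k \<le> H n) x"
    by (rule count_upto_mono) (use Suc_le_H_if_exact_power_two_dvd[OF assms] in \<open>auto simp: T_def\<close>)
  moreover have "real x / 2 ^ T - real x / 2 ^ Suc T = 1 / 2 ^ Suc T * real x"
    by simp
  ultimately show "1 / 2 ^ Suc (tet 2 k) * real x - 1 \<le> real (count_upto (\<lambda>n. Suc k \<le> H n) x)"
    unfolding T_def abs_le_iff by linarith
qed

lemma H_ge_density_le:
  assumes "k \<ge> 2"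
  defines "T \<equiv> tet 2 k"
  shows "H_ge_density (Suc k)
    \<le> 1 / 2 ^ Suc T + (1 / 2 ^ (2 * T) + (1 / 3 ^ T + 1 / (3 * 4 ^ (T - 2))))"
    (is "_ \<le> ?h")
proof (rule ratio_limit_le[where e = 1])
  show "(\<lambda>x. real (count_upto (\<lambda>n. Suc k \<le> H n) x) / real x) \<longlonglongrightarrow> H_ge_density (Suc k)"
    using assms by (intro ratio_H_ge_tendsto) simp
next
  fix x
  let ?A = "\<lambda>n. 2 ^ T dvd n \<and> \<not> 2 ^ Suc T dvd n"
  let ?B = "\<lambda>n. 2 ^ (2 * T) dvd n"
  let ?C = "\<lambda>n. \<exists>j\<ge>3. j ^ T dvd n"
  have "count_upto (\<lambda>n. Suc k \<le> H n) x \<le> count_upto (\<lambda>n. ?A n \<or> (?B n \<or> ?C n)) x"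
    by (rule count_upto_mono) (erule Suc_le_H_cases[OF assms(1)]; auto simp: T_def)
  also have "\<dots> \<le> count_upto ?A x + (count_upto ?B x + count_upto ?C x)"
    using count_upto_disj[of ?A "\<lambda>n. ?B n \<or> ?C n" x] count_upto_disj[of ?B ?C x] by linarith
  finally have "real (count_upto (\<lambda>n. Suc k \<le> H n) x)
      \<le> real (count_upto ?A x) + (real (count_upto ?B x) + real (count_upto ?C x))"
    by (simp flip: of_nat_add)
  moreover have "real (count_upto ?A x) \<le> real x / 2 ^ T - real x / 2 ^ Suc T + 1"
    using count_upto_dvd_not_dvd[of "2 ^ T" "2 ^ Suc T" x] by (simp add: abs_le_iff)
  moreover have "real (count_upto ?B x) \<le> real x / 2 ^ (2 * T)"
    using count_upto_dvd_le[of "2 ^ (2 * T)" x] by simp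
  moreover have "T \<ge> 2"
    using assms(1) tet_ge_2[of k] by (simp add: T_def)
  then have "real (count_upto ?C x) \<le> real x * (1 / 3 ^ T + 1 / (3 * 4 ^ (T - 2)))"
    using count_upto_power_multiples_le[of T 3 x] by simp
  moreover have "?h * real x = real x / 2 ^ T - real x / 2 ^ Suc T + real x / 2 ^ (2 * T)
      + real x * (1 / 3 ^ T + 1 / (3 * 4 ^ (T - 2)))"
    by (simp add: field_simps)
  ultimately show "real (count_upto (\<lambda>n. Suc k \<le> H n) x) \<le> ?h * real x + 1"
    by linarith
qed

lemma H_ge_density_Suc_Suc_le:
  assumes "k \<ge> 1"
  defines "U \<equiv> tet 2 (Suc k)"
  shows "H_ge_density (Suc (Suc k)) \<le> 1 / 2 ^ U + 1 / (2 * 3 ^ (U - 2))"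
proof (rule ratio_limit_le[where e = 0])
  show "(\<lambda>x. real (count_upto (\<lambda>n. Suc (Suc k) \<le> H n) x) / real x) \<longlonglongrightarrow> H_ge_density (Suc (Suc k))"
    by (intro ratio_H_ge_tendsto) simp
next
  fix x
  have "count_upto (\<lambda>n. Suc (Suc k) \<le> H n) x \<le> count_upto (\<lambda>n. \<exists>j\<ge>2. j ^ U dvd n) x"
  proof (rule count_upto_mono)
    fix n
    assume "Suc (Suc k) \<le> H n"
    then obtain p where "prime p" "U \<le> multiplicity p n"
      using multiplicity_ge_tet_if_Suc_le_H[of "Suc k" n] by (auto simp: U_def)
    then show "\<exists>j\<ge>2. j ^ U dvd n"
      using prime_ge_2_nat multiplicity_dvd' by blast
  qed
  moreover have "U \<ge> 2"
    unfolding U_def by (rule tet_ge_2) simp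
  ultimately show "real (count_upto (\<lambda>n. Suc (Suc k) \<le> H n) x)
      \<le> (1 / 2 ^ U + 1 / (2 * 3 ^ (U - 2))) * real x + 0"
    using count_upto_power_multiples_le[of U 2 x] by (simp add: mult.commute)
qed

lemma inverse_power_sum_le:
  assumes "T \<ge> 5"
  shows "1 / 2 ^ (2 * T) + (1 / 3 ^ T + 1 / (3 * 4 ^ (T - 2))) \<le> (3::real) / 3 ^ T"
proof -
  define A B :: real where "A = 3 ^ T" and "B = 4 ^ T"
  have "B > 0"
    by (simp add: B_def)
  have "19 * 3 ^ T \<le> 6 * (4::nat) ^ T"
    using assms by (induction T rule: dec_induct) simp_all
  then have "real (19 * 3 ^ T) \<le> real (6 * 4 ^ T)"
    by (simp only: of_nat_le_iff)
  then have "19 * A \<le> 6 * B"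
    by (simp add: A_def B_def)
  have "T = (T - 2) + 2"
    using assms by simp
  then have "(4::real) ^ T = 4 ^ (T - 2) * 4 ^ 2"
    by (metis power_add)
  then have "(4::real) ^ (T - 2) = B / 16"
    by (simp add: B_def)
  moreover have "(2::real) ^ (2 * T) = B"
    by (simp add: B_def power_mult)
  ultimately have "1 / 2 ^ (2 * T) + (1 / 3 ^ T + 1 / (3 * 4 ^ (T - 2))) = 1 / A + 19 / (3 * B)"
    using \<open>B > 0\<close> by (simp add: A_def field_simps)
  also have "19 / (3 * B) \<le> 2 / A"
    using \<open>19 * A \<le> 6 * B\<close> by (simp add: A_def B_def field_simps)
  finally show ?thesis
    by (simp add: A_def)
qed

lemma inverse_tower_sum_le:
  assumes "T \<ge> 4"
  shows "1 / 2 ^ 2 ^ T + 1 / (2 * 3 ^ (2 ^ T - 2)) \<le> (3::real) / 3 ^ T"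
proof -
  define U :: nat where "U = 2 ^ T"
  define A C :: real where "A = 3 ^ T" and "C = 2 ^ U"
  have "C > 0"
    by (simp add: C_def)
  have "2 * T + 4 \<le> 2 ^ T"
    using assms by (induction T rule: dec_induct) simp_all
  have "11 * 3 ^ T \<le> 16 * (4::nat) ^ T"
    by (intro mult_mono power_mono) simp_all
  also have "\<dots> = 2 ^ (2 * T + 4)"
    by (simp add: power_add power_mult)
  also have "\<dots> \<le> 2 ^ U"
    using \<open>2 * T + 4 \<le> 2 ^ T\<close> unfolding U_def by (intro power_increasing) simp_all
  finally have "real (11 * 3 ^ T) \<le> real (2 ^ U)"
    by (simp only: of_nat_le_iff)
  then have "11 * A \<le> C"
    by (simp add: A_def C_def)
  have "U = (U - 2) + 2"
    using \<open>2 * T + 4 \<le> 2 ^ T\<close> by (simp add: U_def)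
  then have "(3::real) ^ U = 3 ^ (U - 2) * 3 ^ 2"
    by (metis power_add)
  moreover have "C \<le> 3 ^ U"
    unfolding C_def by (intro power_mono) simp_all
  ultimately have "1 / (2 * 3 ^ (U - 2)) \<le> 9 / (2 * C)"
    using \<open>C > 0\<close> by (simp add: field_simps)
  then have "1 / C + 1 / (2 * 3 ^ (U - 2)) \<le> (11 / 2) / C"
    using \<open>C > 0\<close> by (simp add: field_simps)
  also have "\<dots> \<le> 3 / A"
    using \<open>11 * A \<le> C\<close> \<open>C > 0\<close> by (simp add: A_def field_simps)
  finally show ?thesis
    by (simp add: U_def A_def C_def)
qed

theorem lemma6:
  fixes m :: nat
  assumes "m \<ge> 4"
  shows "\<bar>D m - (1/2) * (1 / real (tet 2 m))\<bar> \<le> 3 / 3 ^ (tet 2 (m - 1))"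
proof -
  define k where "k = m - 1"
  define T where "T = tet 2 k"
  have k: "m = Suc k" "k \<ge> 3"
    using assms by (simp_all add: k_def)
  have "T \<ge> 16"
    using tet_mono[OF k(2)] by (simp add: T_def numeral_eq_Suc)
  have "D m = H_ge_density (Suc k) - H_ge_density (Suc (Suc k))"
    using D_eq_H_ge_density_diff[of m] k by simp
  moreover have "1 / 2 ^ Suc T \<le> H_ge_density (Suc k)"
    using H_ge_density_ge[of k] k by (simp add: T_def)
  moreover have "H_ge_density (Suc k) \<le> 1 / 2 ^ Suc T + 3 / 3 ^ T"
    using H_ge_density_le[of k] inverse_power_sum_le[of T] k \<open>T \<ge> 16\<close> by (simp add: T_def)
  moreover have "0 \<le> H_ge_density (Suc (Suc k))"
    by (rule H_ge_density_nonneg) simp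
  moreover have "H_ge_density (Suc (Suc k)) \<le> 3 / 3 ^ T"
    using H_ge_density_Suc_Suc_le[of k] inverse_tower_sum_le[of T] k \<open>T \<ge> 16\<close> by (simp add: T_def)
  moreover have "(1/2) * (1 / real (tet 2 m)) = 1 / 2 ^ Suc T"
    by (simp add: k(1) T_def)
  ultimately show ?thesis
    unfolding k_def[symmetric] T_def[symmetric] abs_le_iff by linarith
qed

end
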